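(* Let $R$ be a field, $S$ an idempotent semifield and $v:R\to S$ a surjective B\'ezout valuation. Then $\operatorname{Frac}(R^\circ)=R$, $R^\circ$ is a B\'ezout domain, and $v$ is isomorphic to the valuation $\operatorname{Frac}(\pi):\operatorname{Frac}(R^\circ)\to\operatorname{Frac}(\Gamma(R^\circ))$; i.e. there is a semifield isomorphism $\Phi:\operatorname{Frac}(\Gamma(R^\circ))\to S$ with $v=\Phi\circ\operatorname{Frac}(\pi)$.
   Context: An idempotent semiring is commutative with $a+a=a$, ordered by $a\le b$ iff $a+b=b$; a semifield has nonzero elements invertible. A valuation $v:R\to S$ satisfies $v(0)=0$, $v(1)=v(-1)=1$, $v(ab)=v(a)v(b)$, $v(a+b)\le v(a)+v(b)$, $v(a)\ne0$ for $a\ne0$. $R^\circ=\{a:v(a)\le1\}$. $v$ is B\'ezout if for all $a,b\in R$ there are $x,y\in R^\circ$ with $v(xa+yb)=v(a)+v(b)$. For a B\'ezout domain $D$ (every finitely generated ideal principal), $\Gamma(D)=D/U(D)$ is the set of classes of elements up to units, an idempotent semiring with $[a][b]=[ab]$ and $[a]+[b]=[\gcd(a,b)]$; $\pi:D\to\Gamma(D)$ is the projection; $\Gamma(D)$ is multiplicatively cancellative and $\operatorname{Frac}(\pi)(a/b)=\pi(a)/\pi(b)$. *)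

theory Defs
  imports Main
begin

class idem_semifield = comm_semiring_1 +
  assumes add_idem: "a + a = a"
    and mult_inv_ex: "a \<noteq> 0 \<Longrightarrow> \<exists>b. a * b = 1"

definition ple :: "'b::idem_semifield \<Rightarrow> 'b \<Rightarrow> bool" where
  "ple a b \<longleftrightarrow> a + b = b"

definition valuation :: "('a::field \<Rightarrow> 'b::idem_semifield) \<Rightarrow> bool" where
  "valuation v \<longleftrightarrow>
     v 0 = 0 \<and> v 1 = 1 \<and> v (-1) = 1 \<and>
     (\<forall>a b. v (a * b) = v a * v b) \<and>
     (\<forall>a b. ple (v (a + b)) (v a + v b)) \<and>
     (\<forall>a. a \<noteq> 0 \<longrightarrow> v a \<noteq> 0)"

definition Rcirc :: "('a::field \<Rightarrow> 'b::idem_semifield) \<Rightarrow> 'a set" where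
  "Rcirc v = {a. ple (v a) 1}"

definition bezout_valuation :: "('a::field \<Rightarrow> 'b::idem_semifield) \<Rightarrow> bool" where
  "bezout_valuation v \<longleftrightarrow>
     (\<forall>a b. \<exists>x\<in>Rcirc v. \<exists>y\<in>Rcirc v. v (x * a + y * b) = v a + v b)"

definition subring_of :: "'a::field set \<Rightarrow> bool" where
  "subring_of A \<longleftrightarrow> 0 \<in> A \<and> 1 \<in> A \<and> (\<forall>a\<in>A. -a \<in> A) \<and>
     (\<forall>a\<in>A. \<forall>b\<in>A. a + b \<in> A) \<and> (\<forall>a\<in>A. \<forall>b\<in>A. a * b \<in> A)"

definition frac_in :: "'a::field set \<Rightarrow> 'a set" where
  "frac_in A = {a / b | a b. a \<in> A \<and> b \<in> A \<and> b \<noteq> 0}"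

definition ideal_gen :: "'a::field set \<Rightarrow> 'a set \<Rightarrow> 'a set" where
  "ideal_gen A F = {\<Sum>f\<in>F. c f * f | c. \<forall>f\<in>F. c f \<in> A}"

text \<open>A Bezout domain: a (sub)ring of a field (hence an integral domain) in which every
  finitely generated ideal is principal.\<close>
definition bezout_domain :: "'a::field set \<Rightarrow> bool" where
  "bezout_domain A \<longleftrightarrow> subring_of A \<and>
     (\<forall>F. finite F \<and> F \<subseteq> A \<longrightarrow> (\<exists>d\<in>A. ideal_gen A F = {x * d | x. x \<in> A}))"

definition divides_in :: "'a::field set \<Rightarrow> 'a \<Rightarrow> 'a \<Rightarrow> bool" where
  "divides_in A d a \<longleftrightarrow> (\<exists>x\<in>A. a = x * d)"

definition is_gcd_in :: "'a::field set \<Rightarrow> 'a \<Rightarrow> 'a \<Rightarrow> 'a \<Rightarrow> bool" where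
  "is_gcd_in A a b d \<longleftrightarrow> d \<in> A \<and> divides_in A d a \<and> divides_in A d b \<and>
     (\<forall>e\<in>A. divides_in A e a \<and> divides_in A e b \<longrightarrow> divides_in A e d)"

definition units_in :: "'a::field set \<Rightarrow> 'a set" where
  "units_in A = {u \<in> A. \<exists>w\<in>A. u * w = 1}"

definition gclass :: "'a::field set \<Rightarrow> 'a \<Rightarrow> 'a set" where
  "gclass A a = {a * u | u. u \<in> units_in A}"

definition Gamma :: "'a::field set \<Rightarrow> 'a set set" where
  "Gamma A = gclass A ` A"

definition gamma_add :: "'a::field set \<Rightarrow> 'a set \<Rightarrow> 'a set \<Rightarrow> 'a set" where
  "gamma_add A p q = gclass A (SOME d. is_gcd_in A (SOME a. a \<in> p) (SOME b. b \<in> q) d)"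

definition gamma_mult :: "'a::field set \<Rightarrow> 'a set \<Rightarrow> 'a set \<Rightarrow> 'a set" where
  "gamma_mult A p q = gclass A ((SOME a. a \<in> p) * (SOME b. b \<in> q))"

definition fg_pairs :: "'a::field set \<Rightarrow> ('a set \<times> 'a set) set" where
  "fg_pairs A = Gamma A \<times> (Gamma A - {gclass A 0})"

definition fg_class :: "'a::field set \<Rightarrow> 'a set \<times> 'a set \<Rightarrow> ('a set \<times> 'a set) set" where
  "fg_class A pq = {pq' \<in> fg_pairs A.
      gamma_mult A (fst pq) (snd pq') = gamma_mult A (fst pq') (snd pq)}"

definition FracGamma :: "'a::field set \<Rightarrow> ('a set \<times> 'a set) set set" where
  "FracGamma A = fg_class A ` fg_pairs A"

definition fg_add :: "'a::field set \<Rightarrow> ('a set \<times> 'a set) set \<Rightarrow> ('a set \<times> 'a set) set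
    \<Rightarrow> ('a set \<times> 'a set) set" where
  "fg_add A X Y = (let (p, q) = (SOME z. z \<in> X); (p', q') = (SOME z. z \<in> Y) in
     fg_class A (gamma_add A (gamma_mult A p q') (gamma_mult A p' q), gamma_mult A q q'))"

definition fg_mult :: "'a::field set \<Rightarrow> ('a set \<times> 'a set) set \<Rightarrow> ('a set \<times> 'a set) set
    \<Rightarrow> ('a set \<times> 'a set) set" where
  "fg_mult A X Y = (let (p, q) = (SOME z. z \<in> X); (p', q') = (SOME z. z \<in> Y) in
     fg_class A (gamma_mult A p p', gamma_mult A q q'))"

definition fg_zero :: "'a::field set \<Rightarrow> ('a set \<times> 'a set) set" where
  "fg_zero A = fg_class A (gclass A 0, gclass A 1)"

definition fg_one :: "'a::field set \<Rightarrow> ('a set \<times> 'a set) set" where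
  "fg_one A = fg_class A (gclass A 1, gclass A 1)"

definition frac_pi :: "'a::field set \<Rightarrow> 'a \<Rightarrow> ('a set \<times> 'a set) set" where
  "frac_pi A r = (let (a, b) = (SOME (a, b). a \<in> A \<and> b \<in> A \<and> b \<noteq> 0 \<and> r = a / b) in
     fg_class A (gclass A a, gclass A b))"

end

theory Submission
  imports Defs
begin

text \<open>
  For a valuation v, divisibility in the valuation ring R = Rcirc v is the reversed order on
  values: d divides a in R iff v a \<le> v d. Hence the class of a up to units of R is the fibre
  of v over v a, and Gamma(R) is identified with the values \<le> 1. The Bezout property yields,
  for all a and b, an R-combination of value v a + v b; such an element is a gcd of a and b, and
  in the same way every finitely generated ideal is generated by an element of maximal value.
  Every r is a quotient of elements of R: with v d = v r + 1 both r/d and 1/d lie in R.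
  Thus Frac(Gamma(R)) is the semifield of quotients s/t of values \<le> 1, which by
  surjectivity of v is all of S, and the isomorphism sends pi(a)/pi(b) to v a / v b = v (a/b).
\<close>

section \<open>Idempotent semifields\<close>

lemma ple_refl: "ple (a::'a::idem_semifield) a"
  by (simp add: ple_def add_idem)

lemma ple_trans: "ple (a::'a::idem_semifield) b \<Longrightarrow> ple b c \<Longrightarrow> ple a c"
  unfolding ple_def by (metis add.assoc)

lemma ple_antisym: "ple (a::'a::idem_semifield) b \<Longrightarrow> ple b a \<Longrightarrow> a = b"
  unfolding ple_def by (metis add.commute)

lemma ple_add_left: "ple (a::'a::idem_semifield) (a + b)"
  unfolding ple_def by (metis add.assoc add_idem)

lemma ple_add_right: "ple (b::'a::idem_semifield) (a + b)"
  using ple_add_left[of b a] by (simp add: add.commute)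

lemma add_ple_iff: "ple ((a::'a::idem_semifield) + b) c \<longleftrightarrow> ple a c \<and> ple b c"
proof
  assume "ple (a + b) c"
  then show "ple a c \<and> ple b c"
    using ple_add_left ple_add_right ple_trans by blast
next
  assume "ple a c \<and> ple b c"
  then show "ple (a + b) c"
    unfolding ple_def by (metis add.assoc)
qed

lemma add_ple_add: "ple (a::'a::idem_semifield) b \<Longrightarrow> ple c d \<Longrightarrow> ple (a + c) (b + d)"
  by (meson add_ple_iff ple_add_left ple_add_right ple_trans)

lemma ple_mult_right: "ple (a::'a::idem_semifield) b \<Longrightarrow> ple (a * c) (b * c)"
  unfolding ple_def by (metis distrib_right)

lemma ple_one_mult: "ple (a::'a::idem_semifield) 1 \<Longrightarrow> ple (a * b) b"
  using ple_mult_right[of a 1 b] by simp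

lemma mult_ple_one: "ple (a::'a::idem_semifield) 1 \<Longrightarrow> ple b 1 \<Longrightarrow> ple (a * b) 1"
  using ple_one_mult ple_trans by blast

lemma zero_ple: "ple 0 (a::'a::idem_semifield)"
  by (simp add: ple_def)

lemma ple_zero_iff: "ple (a::'a::idem_semifield) 0 \<longleftrightarrow> a = 0"
  by (simp add: ple_def)

lemma add_eq_0_imp_eq_0: "(a::'a::idem_semifield) + b = 0 \<Longrightarrow> a = 0"
  using ple_add_left[of a b] by (simp add: ple_zero_iff)

lemma ple_sum_mono:
  "(\<And>i. i \<in> I \<Longrightarrow> ple (f i) (g i)) \<Longrightarrow> ple (\<Sum>i\<in>I. f i) (\<Sum>i\<in>I. g i :: 'a::idem_semifield)"
  by (induction I rule: infinite_finite_induct) (auto intro: add_ple_add simp: ple_refl)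

lemma sum_ple_iff:
  "ple (\<Sum>i\<in>I. f i) (c::'a::idem_semifield) \<longleftrightarrow> (finite I \<longrightarrow> (\<forall>i\<in>I. ple (f i) c))"
  by (induction I rule: infinite_finite_induct) (auto simp: add_ple_iff zero_ple)

definition sf_inv :: "'a::idem_semifield \<Rightarrow> 'a" where
  "sf_inv a = (SOME b. a * b = 1)"

lemma sf_inv_right: "(a::'a::idem_semifield) \<noteq> 0 \<Longrightarrow> a * sf_inv a = 1"
  unfolding sf_inv_def by (rule someI_ex) (rule mult_inv_ex)

lemma sf_mult_left_cancel: "(a::'a::idem_semifield) \<noteq> 0 \<Longrightarrow> a * x = a * y \<Longrightarrow> x = y"
proof -
  assume a: "a \<noteq> 0" and "a * x = a * y"
  then have "(sf_inv a * a) * x = (sf_inv a * a) * y"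
    by (simp add: mult.assoc)
  then show "x = y"
    using sf_inv_right[OF a] by (simp add: mult.commute)
qed

lemma sf_mult_eq_0_iff: "(a::'a::idem_semifield) * b = 0 \<longleftrightarrow> a = 0 \<or> b = 0"
  using sf_mult_left_cancel[of a b 0] by auto

lemma sf_inv_one: "sf_inv (1::'a::idem_semifield) = 1"
  using sf_inv_right[of "1::'a"] by simp

lemma sf_inv_mult:
  assumes "(a::'a::idem_semifield) \<noteq> 0" and "b \<noteq> 0"
  shows "sf_inv (a * b) = sf_inv a * sf_inv b"
proof -
  have ab: "a * b \<noteq> 0"
    using assms by (simp add: sf_mult_eq_0_iff)
  have "(a * b) * (sf_inv a * sf_inv b) = (a * sf_inv a) * (b * sf_inv b)"
    by (simp add: ac_simps)
  also have "\<dots> = (a * b) * sf_inv (a * b)"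
    using assms ab by (simp add: sf_inv_right)
  finally show ?thesis
    using sf_mult_left_cancel[OF ab] by simp
qed

lemma sf_frac_eq_iff:
  fixes a b s t :: "'a::idem_semifield"
  assumes "b \<noteq> 0" and "t \<noteq> 0"
  shows "s * b = a * t \<longleftrightarrow> s * sf_inv t = a * sf_inv b"
proof -
  have bt: "b * t \<noteq> 0"
    using assms by (simp add: sf_mult_eq_0_iff)
  have "(s * sf_inv t) * (b * t) = (s * b) * (t * sf_inv t)"
    and "(a * sf_inv b) * (b * t) = (a * t) * (b * sf_inv b)"
    by (simp_all add: ac_simps)
  then have "(s * sf_inv t) * (b * t) = s * b" and "(a * sf_inv b) * (b * t) = a * t"
    using assms by (simp_all add: sf_inv_right)
  then show ?thesis
    using sf_mult_left_cancel[OF bt] by (metis mult.commute)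
qed

section \<open>Valuations and their valuation rings\<close>

locale field_valuation =
  fixes v :: "'a::field \<Rightarrow> 'b::idem_semifield"
  assumes valuation: "valuation v"
begin

lemma v_0: "v 0 = 0" and v_1: "v 1 = 1" and v_minus_1: "v (-1) = 1"
  and v_mult: "v (a * b) = v a * v b" and v_add_ple: "ple (v (a + b)) (v a + v b)"
  and v_nonzero: "a \<noteq> 0 \<Longrightarrow> v a \<noteq> 0"
  using valuation unfolding valuation_def by auto

lemma v_eq_0_iff: "v a = 0 \<longleftrightarrow> a = 0"
  using v_0 v_nonzero by blast

lemma v_minus: "v (-a) = v a"
  by (metis mult_minus1 v_mult v_minus_1 mult_1_left)

lemma v_divide:
  assumes "b \<noteq> 0"
  shows "v (a / b) = v a * sf_inv (v b)"
proof -
  have "v a = v (a / b) * v b"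
    using assms v_mult by (metis nonzero_divide_eq_eq)
  then show ?thesis
    using sf_inv_right[OF v_nonzero[OF assms]] by (simp add: mult.assoc)
qed

lemma v_sum_ple: "ple (v (\<Sum>i\<in>I. f i)) (\<Sum>i\<in>I. v (f i))"
proof (induction I rule: infinite_finite_induct)
  case (insert i I)
  have "ple (v (f i) + v (\<Sum>i\<in>I. f i)) (v (f i) + (\<Sum>i\<in>I. v (f i)))"
    by (rule add_ple_add[OF ple_refl insert.IH])
  then show ?case
    using insert.hyps v_add_ple ple_trans by fastforce
qed (simp_all add: v_0 ple_refl)

lemma mem_Rcirc: "a \<in> Rcirc v \<longleftrightarrow> ple (v a) 1"
  by (simp add: Rcirc_def)

lemma mult_mem_Rcirc: "a \<in> Rcirc v \<Longrightarrow> b \<in> Rcirc v \<Longrightarrow> a * b \<in> Rcirc v"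
  unfolding mem_Rcirc v_mult by (rule mult_ple_one)

lemma add_mem_Rcirc: "a \<in> Rcirc v \<Longrightarrow> b \<in> Rcirc v \<Longrightarrow> a + b \<in> Rcirc v"
  unfolding mem_Rcirc using v_add_ple[of a b] add_ple_iff ple_trans by blast

lemma subring_of_Rcirc: "subring_of (Rcirc v)"
  unfolding subring_of_def
  using add_mem_Rcirc mult_mem_Rcirc by (simp add: mem_Rcirc v_0 v_1 v_minus zero_ple ple_refl)

lemma divide_mem_Rcirc:
  assumes "ple (v a) (v d)" and "d \<noteq> 0"
  shows "a / d \<in> Rcirc v"
  using ple_mult_right[OF assms(1), of "sf_inv (v d)"]
  by (simp add: mem_Rcirc v_divide assms(2) sf_inv_right v_nonzero)

lemma divides_in_Rcirc_iff: "divides_in (Rcirc v) d a \<longleftrightarrow> ple (v a) (v d)"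
proof
  assume "divides_in (Rcirc v) d a"
  then obtain x where "x \<in> Rcirc v" "a = x * d"
    unfolding divides_in_def by blast
  then show "ple (v a) (v d)"
    by (simp add: mem_Rcirc v_mult ple_one_mult)
next
  assume le: "ple (v a) (v d)"
  show "divides_in (Rcirc v) d a"
  proof (cases "d = 0")
    case True
    then have "a = 0"
      using le by (simp add: v_0 ple_zero_iff v_eq_0_iff)
    then show ?thesis
      unfolding divides_in_def using True subring_of_Rcirc subring_of_def by auto
  next
    case False
    have "a / d \<in> Rcirc v"
      using le False by (rule divide_mem_Rcirc)
    moreover have "a = (a / d) * d"
      using False by simp
    ultimately show ?thesis
      unfolding divides_in_def by blast
  qed
qed

lemma units_in_Rcirc: "units_in (Rcirc v) = {u. v u = 1}"
proof (intro set_eqI iffI)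
  fix u assume "u \<in> units_in (Rcirc v)"
  then obtain w where u: "u \<in> Rcirc v" and w: "w \<in> Rcirc v" and uw: "u * w = 1"
    unfolding units_in_def by auto
  have vuw: "v u * v w = 1"
    using uw v_mult v_1 by metis
  then have "ple 1 (v w)"
    using u ple_one_mult[of "v u" "v w"] by (simp add: mem_Rcirc)
  then have "v w = 1"
    using w ple_antisym by (simp add: mem_Rcirc)
  then show "u \<in> {u. v u = 1}"
    using vuw by simp
next
  fix u assume "u \<in> {u. v u = 1}"
  then have vu: "v u = 1" by simp
  then have u0: "u \<noteq> 0"
    using v_0 by auto
  have "v (inverse u) = 1"
    using v_mult[of u "inverse u"] u0 v_1 vu by simp
  then show "u \<in> units_in (Rcirc v)"
    unfolding units_in_def using vu u0
    by (auto intro!: bexI[of _ "inverse u"] simp: mem_Rcirc ple_refl)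
qed

lemma gclass_Rcirc: "gclass (Rcirc v) a = v -` {v a}"
proof (intro set_eqI iffI)
  fix c assume "c \<in> gclass (Rcirc v) a"
  then show "c \<in> v -` {v a}"
    unfolding gclass_def units_in_Rcirc by (auto simp: v_mult)
next
  fix c assume "c \<in> v -` {v a}"
  then have vc: "v c = v a" by simp
  show "c \<in> gclass (Rcirc v) a"
  proof (cases "a = 0")
    case True
    then show ?thesis
      using vc v_1 by (auto simp: gclass_def units_in_Rcirc v_0 v_eq_0_iff)
  next
    case False
    have "v (c / a) = 1"
      using vc False by (simp add: v_divide sf_inv_right v_nonzero)
    moreover have "c = a * (c / a)"
      using False by simp
    ultimately show ?thesis
      unfolding gclass_def units_in_Rcirc by blast
  qed
qed

lemma ideal_gen_mult: "x \<in> Rcirc v \<Longrightarrow> e \<in> ideal_gen (Rcirc v) F \<Longrightarrow> x * e \<in> ideal_gen (Rcirc v) F"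
proof -
  assume x: "x \<in> Rcirc v" and "e \<in> ideal_gen (Rcirc v) F"
  then obtain c where c: "\<forall>f\<in>F. c f \<in> Rcirc v" and e: "e = (\<Sum>f\<in>F. c f * f)"
    unfolding ideal_gen_def by auto
  show ?thesis
    unfolding ideal_gen_def mem_Collect_eq
    by (rule exI[where x = "\<lambda>f. x * c f"])
      (use e c x mult_mem_Rcirc in \<open>simp add: sum_distrib_left mult.assoc\<close>)
qed

lemma v_ideal_gen_ple: "e \<in> ideal_gen (Rcirc v) F \<Longrightarrow> ple (v e) (\<Sum>f\<in>F. v f)"
proof -
  assume "e \<in> ideal_gen (Rcirc v) F"
  then obtain c where c: "\<forall>f\<in>F. c f \<in> Rcirc v" and e: "e = (\<Sum>f\<in>F. c f * f)"
    unfolding ideal_gen_def by auto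
  have "ple (\<Sum>f\<in>F. v (c f * f)) (\<Sum>f\<in>F. v f)"
    using c by (intro ple_sum_mono) (simp add: v_mult mem_Rcirc ple_one_mult)
  then show ?thesis
    using e v_sum_ple ple_trans by metis
qed

lemma ideal_gen_eq_principal:
  assumes "d \<in> ideal_gen (Rcirc v) F" and "\<forall>e\<in>ideal_gen (Rcirc v) F. ple (v e) (v d)"
  shows "ideal_gen (Rcirc v) F = {x * d | x. x \<in> Rcirc v}"
proof (intro set_eqI iffI)
  fix e assume "e \<in> ideal_gen (Rcirc v) F"
  then have "divides_in (Rcirc v) d e"
    using assms(2) divides_in_Rcirc_iff by blast
  then show "e \<in> {x * d | x. x \<in> Rcirc v}"
    unfolding divides_in_def by blast
qed (use assms(1) ideal_gen_mult in blast)

lemma is_gcd_in_if_v_eq_add: "d \<in> Rcirc v \<Longrightarrow> v d = v a + v b \<Longrightarrow> is_gcd_in (Rcirc v) a b d"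
  unfolding is_gcd_in_def divides_in_Rcirc_iff by (simp add: ple_add_left ple_add_right add_ple_iff)

lemma v_is_gcd_in_unique:
  "is_gcd_in (Rcirc v) a b d \<Longrightarrow> is_gcd_in (Rcirc v) a b d' \<Longrightarrow> v d = v d'"
  unfolding is_gcd_in_def divides_in_Rcirc_iff using ple_antisym by blast

end

section \<open>Bezout valuations\<close>

locale bezout_field_valuation = field_valuation +
  assumes bezout: "bezout_valuation v"
begin

lemma bezout_combination: "\<exists>x\<in>Rcirc v. \<exists>y\<in>Rcirc v. v (x * a + y * b) = v a + v b"
  using bezout unfolding bezout_valuation_def by blast

lemma frac_in_Rcirc: "frac_in (Rcirc v) = UNIV"
proof -
  have "r \<in> frac_in (Rcirc v)" for r
  proof -
    obtain x y where "v (x * r + y * 1) = v r + 1"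
      using bezout_combination[of r 1] v_1 by auto
    then obtain d where vd: "v d = v r + 1"
      by blast
    have d0: "d \<noteq> 0"
      using vd add_eq_0_imp_eq_0[of 1 "v r"] by (auto simp: add.commute v_0)
    have "r / d \<in> Rcirc v"
      by (rule divide_mem_Rcirc) (simp_all add: vd ple_add_left d0)
    moreover have "1 / d \<in> Rcirc v"
      by (rule divide_mem_Rcirc) (simp_all add: vd v_1 ple_add_right d0)
    moreover have "r = (r / d) / (1 / d)" and "1 / d \<noteq> 0"
      using d0 by simp_all
    ultimately show ?thesis
      unfolding frac_in_def by blast
  qed
  then show ?thesis by auto
qed

lemma Rcirc_quotientE:
  obtains a b where "a \<in> Rcirc v" "b \<in> Rcirc v" "b \<noteq> 0" "r = a / b"
proof -
  have "r \<in> frac_in (Rcirc v)"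
    by (simp add: frac_in_Rcirc)
  then show ?thesis
    using that unfolding frac_in_def by blast
qed

lemma ideal_gen_attains_sum: "finite F \<Longrightarrow> \<exists>d\<in>ideal_gen (Rcirc v) F. v d = (\<Sum>f\<in>F. v f)"
proof (induction F rule: finite_induct)
  case empty
  have "0 \<in> ideal_gen (Rcirc v) {}"
    unfolding ideal_gen_def by auto
  then show ?case
    using v_0 by auto
next
  case (insert a F)
  then obtain c where c: "\<forall>f\<in>F. c f \<in> Rcirc v" and vd: "v (\<Sum>f\<in>F. c f * f) = (\<Sum>f\<in>F. v f)"
    unfolding ideal_gen_def by auto
  define d where "d = (\<Sum>f\<in>F. c f * f)"
  obtain x y where xy: "x \<in> Rcirc v" "y \<in> Rcirc v" and e: "v (x * a + y * d) = v a + v d"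
    using bezout_combination by blast
  define c' where "c' f = (if f = a then x else y * c f)" for f
  have "(\<Sum>f\<in>F. c' f * f) = y * d"
    using insert.hyps(2) unfolding c'_def d_def sum_distrib_left
    by (intro sum.cong) (auto simp: mult.assoc)
  then have "x * a + y * d = (\<Sum>f\<in>insert a F. c' f * f)"
    using insert.hyps by (simp add: c'_def)
  moreover have "\<forall>f\<in>insert a F. c' f \<in> Rcirc v"
    using c xy mult_mem_Rcirc unfolding c'_def by auto
  ultimately have "x * a + y * d \<in> ideal_gen (Rcirc v) (insert a F)"
    unfolding ideal_gen_def by blast
  moreover have "v (x * a + y * d) = (\<Sum>f\<in>insert a F. v f)"
    using e vd insert.hyps by (simp add: d_def)
  ultimately show ?case by blast
qed

lemma bezout_domain_Rcirc: "bezout_domain (Rcirc v)"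
  unfolding bezout_domain_def
proof (intro conjI allI impI)
  fix F assume F: "finite F \<and> F \<subseteq> Rcirc v"
  then obtain d where d: "d \<in> ideal_gen (Rcirc v) F" and vd: "v d = (\<Sum>f\<in>F. v f)"
    using ideal_gen_attains_sum by blast
  have "d \<in> Rcirc v"
    using F by (auto simp: mem_Rcirc vd sum_ple_iff)
  moreover have "ideal_gen (Rcirc v) F = {x * d | x. x \<in> Rcirc v}"
    using d vd v_ideal_gen_ple by (intro ideal_gen_eq_principal) auto
  ultimately show "\<exists>d\<in>Rcirc v. ideal_gen (Rcirc v) F = {x * d | x. x \<in> Rcirc v}"
    by blast
qed (rule subring_of_Rcirc)

lemma v_eq_add_in_Rcirc:
  assumes "a \<in> Rcirc v" and "b \<in> Rcirc v"
  obtains d where "d \<in> Rcirc v" and "v d = v a + v b"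
proof -
  obtain x y where "v (x * a + y * b) = v a + v b"
    using bezout_combination by blast
  moreover have "ple (v a + v b) 1"
    using assms by (simp add: mem_Rcirc add_ple_iff)
  ultimately show ?thesis
    using that by (simp add: mem_Rcirc)
qed

lemma is_gcd_in_Rcirc_iff:
  assumes "a \<in> Rcirc v" and "b \<in> Rcirc v"
  shows "is_gcd_in (Rcirc v) a b d \<longleftrightarrow> d \<in> Rcirc v \<and> v d = v a + v b"
proof
  assume gcd: "is_gcd_in (Rcirc v) a b d"
  obtain d' where "d' \<in> Rcirc v" and d': "v d' = v a + v b"
    using v_eq_add_in_Rcirc[OF assms] .
  then have "v d = v d'"
    using v_is_gcd_in_unique[OF gcd] is_gcd_in_if_v_eq_add by blast
  then show "d \<in> Rcirc v \<and> v d = v a + v b"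
    using gcd d' unfolding is_gcd_in_def by simp
next
  assume "d \<in> Rcirc v \<and> v d = v a + v b"
  then show "is_gcd_in (Rcirc v) a b d"
    using is_gcd_in_if_v_eq_add by blast
qed

end

section \<open>The isomorphism Frac(Gamma(Rcirc v)) \<cong> S\<close>

locale surjective_bezout_field_valuation = bezout_field_valuation +
  assumes surjective: "surj v"
begin

definition class_value :: "'a set \<Rightarrow> 'b" where
  "class_value p = v (SOME c. c \<in> p)"

lemma class_value_vimage [simp]: "class_value (v -` {s}) = s"
proof -
  obtain c where c: "s = v c"
    using surjective by (rule surjE)
  have "(SOME c. c \<in> v -` {s}) \<in> v -` {s}"
    by (rule someI[of _ c]) (simp add: c)
  then show ?thesis
    unfolding class_value_def by simp
qed

lemma vimage_singleton_eq_iff: "v -` {s} = v -` {t} \<longleftrightarrow> s = t"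
proof
  assume "v -` {s} = v -` {t}"
  then have "class_value (v -` {s}) = class_value (v -` {t})"
    by (rule arg_cong)
  then show "s = t"
    by simp
qed simp

lemma gamma_mult_vimage: "gamma_mult (Rcirc v) (v -` {s}) (v -` {t}) = v -` {s * t}"
  using class_value_vimage[of s] class_value_vimage[of t]
  unfolding gamma_mult_def gclass_Rcirc v_mult class_value_def by simp

lemma gamma_add_vimage:
  assumes "ple s 1" and "ple t 1"
  shows "gamma_add (Rcirc v) (v -` {s}) (v -` {t}) = v -` {s + t}"
proof -
  define a where "a = (SOME c. c \<in> v -` {s})"
  define b where "b = (SOME c. c \<in> v -` {t})"
  have "v a = s" and "v b = t"
    using class_value_vimage[of s] class_value_vimage[of t]
    unfolding a_def b_def class_value_def by simp_all
  then have ab: "a \<in> Rcirc v" "b \<in> Rcirc v" and st: "v a + v b = s + t"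
    using assms by (simp_all add: mem_Rcirc)
  obtain d where "is_gcd_in (Rcirc v) a b d"
    using v_eq_add_in_Rcirc[OF ab] is_gcd_in_Rcirc_iff[OF ab] by blast
  then have "is_gcd_in (Rcirc v) a b (SOME d. is_gcd_in (Rcirc v) a b d)"
    by (rule someI)
  then have "v (SOME d. is_gcd_in (Rcirc v) a b d) = s + t"
    unfolding is_gcd_in_Rcirc_iff[OF ab] st by (rule conjunct2)
  then show ?thesis
    unfolding gamma_add_def a_def[symmetric] b_def[symmetric] gclass_Rcirc by simp
qed

lemma Gamma_Rcirc_iff: "p \<in> Gamma (Rcirc v) \<longleftrightarrow> (\<exists>s. ple s 1 \<and> p = v -` {s})"
proof
  assume "p \<in> Gamma (Rcirc v)"
  then obtain a where "a \<in> Rcirc v" and "p = gclass (Rcirc v) a"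
    unfolding Gamma_def by blast
  then show "\<exists>s. ple s 1 \<and> p = v -` {s}"
    by (auto simp: gclass_Rcirc mem_Rcirc)
next
  assume "\<exists>s. ple s 1 \<and> p = v -` {s}"
  then obtain s where "ple s 1" and p: "p = v -` {s}"
    by blast
  moreover obtain a where "s = v a"
    using surjective by (rule surjE)
  ultimately show "p \<in> Gamma (Rcirc v)"
    unfolding Gamma_def by (auto simp: gclass_Rcirc mem_Rcirc)
qed

lemma fg_pairs_Rcirc_iff: "z \<in> fg_pairs (Rcirc v) \<longleftrightarrow>
    (\<exists>s t. ple s 1 \<and> ple t 1 \<and> t \<noteq> 0 \<and> z = (v -` {s}, v -` {t}))"
  unfolding fg_pairs_def gclass_Rcirc v_0
  using Gamma_Rcirc_iff vimage_singleton_eq_iff by (cases z) auto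

definition pair_ratio :: "'a set \<times> 'a set \<Rightarrow> 'b" where
  "pair_ratio z = class_value (fst z) * sf_inv (class_value (snd z))"

lemma pair_ratio_vimage [simp]: "pair_ratio (v -` {s}, v -` {t}) = s * sf_inv t"
  by (simp add: pair_ratio_def)

lemma fg_class_vimage:
  assumes "t \<noteq> 0"
  shows "fg_class (Rcirc v) (v -` {s}, v -` {t}) = {z \<in> fg_pairs (Rcirc v). pair_ratio z = s * sf_inv t}"
proof -
  have "gamma_mult (Rcirc v) (v -` {s}) (snd z) = gamma_mult (Rcirc v) (fst z) (v -` {t})
      \<longleftrightarrow> pair_ratio z = s * sf_inv t" if "z \<in> fg_pairs (Rcirc v)" for z
  proof -
    from that obtain s' t' where "t' \<noteq> 0" and z: "z = (v -` {s'}, v -` {t'})"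
      unfolding fg_pairs_Rcirc_iff by blast
    then show ?thesis
      using sf_frac_eq_iff[of t' t s s'] assms
      by (auto simp: gamma_mult_vimage vimage_singleton_eq_iff)
  qed
  then show ?thesis
    unfolding fg_class_def by auto
qed

definition Phi :: "('a set \<times> 'a set) set \<Rightarrow> 'b" where
  "Phi X = pair_ratio (SOME z. z \<in> X)"

lemma vimage_pair_mem_fg_class:
  assumes "ple s 1" and "ple t 1" and "t \<noteq> 0"
  shows "(v -` {s}, v -` {t}) \<in> fg_class (Rcirc v) (v -` {s}, v -` {t})"
  using assms by (auto simp: fg_class_vimage fg_pairs_Rcirc_iff)

lemma Phi_fg_class:
  assumes "ple s 1" and "ple t 1" and "t \<noteq> 0"
  shows "Phi (fg_class (Rcirc v) (v -` {s}, v -` {t})) = s * sf_inv t"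
proof -
  let ?X = "fg_class (Rcirc v) (v -` {s}, v -` {t})"
  have "(SOME z. z \<in> ?X) \<in> ?X"
    using vimage_pair_mem_fg_class[OF assms] by (rule someI)
  then show ?thesis
    unfolding Phi_def using fg_class_vimage[OF assms(3)] by simp
qed

lemma FracGamma_Rcirc_iff: "X \<in> FracGamma (Rcirc v) \<longleftrightarrow>
    (\<exists>s t. ple s 1 \<and> ple t 1 \<and> t \<noteq> 0 \<and> X = fg_class (Rcirc v) (v -` {s}, v -` {t}))"
proof
  assume "X \<in> FracGamma (Rcirc v)"
  then obtain z where "z \<in> fg_pairs (Rcirc v)" and "X = fg_class (Rcirc v) z"
    unfolding FracGamma_def by blast
  then show "\<exists>s t. ple s 1 \<and> ple t 1 \<and> t \<noteq> 0 \<and> X = fg_class (Rcirc v) (v -` {s}, v -` {t})"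
    unfolding fg_pairs_Rcirc_iff by blast
next
  assume "\<exists>s t. ple s 1 \<and> ple t 1 \<and> t \<noteq> 0 \<and> X = fg_class (Rcirc v) (v -` {s}, v -` {t})"
  then obtain s t where "ple s 1" "ple t 1" "t \<noteq> 0" and X: "X = fg_class (Rcirc v) (v -` {s}, v -` {t})"
    by blast
  then have "(v -` {s}, v -` {t}) \<in> fg_pairs (Rcirc v)"
    unfolding fg_pairs_Rcirc_iff by blast
  then show "X \<in> FracGamma (Rcirc v)"
    unfolding FracGamma_def X by (rule imageI)
qed

lemma FracGamma_eq_Phi_level:
  "X \<in> FracGamma (Rcirc v) \<Longrightarrow> X = {z \<in> fg_pairs (Rcirc v). pair_ratio z = Phi X}"
  unfolding FracGamma_Rcirc_iff using Phi_fg_class fg_class_vimage by auto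

lemma FracGamma_representative:
  assumes "X \<in> FracGamma (Rcirc v)"
  obtains s t where "ple s 1" "ple t 1" "t \<noteq> 0"
    and "(SOME z. z \<in> X) = (v -` {s}, v -` {t})" and "Phi X = s * sf_inv t"
proof -
  obtain s t where "ple s 1" "ple t 1" "t \<noteq> 0" and X: "X = fg_class (Rcirc v) (v -` {s}, v -` {t})"
    using assms FracGamma_Rcirc_iff by blast
  then have "(SOME z. z \<in> X) \<in> X"
    using vimage_pair_mem_fg_class by (metis someI)
  then have "(SOME z. z \<in> X) \<in> fg_pairs (Rcirc v)"
    unfolding X fg_class_def by blast
  then show ?thesis
    using that unfolding fg_pairs_Rcirc_iff Phi_def by auto
qed

lemma Phi_fg_mult:
  assumes X: "X \<in> FracGamma (Rcirc v)" and Y: "Y \<in> FracGamma (Rcirc v)"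
  shows "Phi (fg_mult (Rcirc v) X Y) = Phi X * Phi Y"
proof -
  obtain s t where st: "ple s 1" "ple t 1" "t \<noteq> 0"
    "(SOME z. z \<in> X) = (v -` {s}, v -` {t})" "Phi X = s * sf_inv t"
    using FracGamma_representative[OF X] by blast
  obtain s' t' where st': "ple s' 1" "ple t' 1" "t' \<noteq> 0"
    "(SOME z. z \<in> Y) = (v -` {s'}, v -` {t'})" "Phi Y = s' * sf_inv t'"
    using FracGamma_representative[OF Y] by blast
  have "fg_mult (Rcirc v) X Y = fg_class (Rcirc v) (v -` {s * s'}, v -` {t * t'})"
    unfolding fg_mult_def Let_def st(4) st'(4) by (simp add: gamma_mult_vimage)
  moreover have "ple (s * s') 1" "ple (t * t') 1" "t * t' \<noteq> 0"
    using st st' by (simp_all add: mult_ple_one sf_mult_eq_0_iff)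
  ultimately have "Phi (fg_mult (Rcirc v) X Y) = (s * s') * sf_inv (t * t')"
    by (simp add: Phi_fg_class)
  then show ?thesis
    using st st' by (simp add: sf_inv_mult ac_simps)
qed

lemma Phi_fg_add:
  assumes X: "X \<in> FracGamma (Rcirc v)" and Y: "Y \<in> FracGamma (Rcirc v)"
  shows "Phi (fg_add (Rcirc v) X Y) = Phi X + Phi Y"
proof -
  obtain s t where st: "ple s 1" "ple t 1" "t \<noteq> 0"
    "(SOME z. z \<in> X) = (v -` {s}, v -` {t})" "Phi X = s * sf_inv t"
    using FracGamma_representative[OF X] by blast
  obtain s' t' where st': "ple s' 1" "ple t' 1" "t' \<noteq> 0"
    "(SOME z. z \<in> Y) = (v -` {s'}, v -` {t'})" "Phi Y = s' * sf_inv t'"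
    using FracGamma_representative[OF Y] by blast
  have le: "ple (s * t') 1" "ple (s' * t) 1" "ple (t * t') 1"
    using st st' by (simp_all add: mult_ple_one)
  have "fg_add (Rcirc v) X Y = fg_class (Rcirc v) (v -` {s * t' + s' * t}, v -` {t * t'})"
    unfolding fg_add_def Let_def st(4) st'(4)
    by (simp add: gamma_mult_vimage gamma_add_vimage le)
  moreover have "ple (s * t' + s' * t) 1" "t * t' \<noteq> 0"
    using le st(3) st'(3) by (simp_all add: add_ple_iff sf_mult_eq_0_iff)
  ultimately have "Phi (fg_add (Rcirc v) X Y) = (s * t' + s' * t) * sf_inv (t * t')"
    using le by (simp add: Phi_fg_class)
  also have "\<dots> = (s * sf_inv t) * (t' * sf_inv t') + (s' * sf_inv t') * (t * sf_inv t)"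
    using st(3) st'(3) by (simp add: sf_inv_mult algebra_simps)
  also have "\<dots> = Phi X + Phi Y"
    using st st' by (simp add: sf_inv_right)
  finally show ?thesis .
qed

lemma inj_on_Phi: "inj_on Phi (FracGamma (Rcirc v))"
  by (rule inj_onI) (metis FracGamma_eq_Phi_level)

lemma Phi_fg_class_v:
  "a \<in> Rcirc v \<Longrightarrow> b \<in> Rcirc v \<Longrightarrow> b \<noteq> 0 \<Longrightarrow> Phi (fg_class (Rcirc v) (v -` {v a}, v -` {v b})) = v (a / b)"
  by (simp add: Phi_fg_class mem_Rcirc v_nonzero v_divide)

lemma Phi_image: "Phi ` FracGamma (Rcirc v) = UNIV"
proof (intro set_eqI iffI)
  fix c :: 'b
  obtain r where r: "c = v r"
    using surjective by (rule surjE)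
  obtain a b where ab: "a \<in> Rcirc v" "b \<in> Rcirc v" "b \<noteq> 0" "r = a / b"
    by (rule Rcirc_quotientE)
  have "fg_class (Rcirc v) (v -` {v a}, v -` {v b}) \<in> FracGamma (Rcirc v)"
    unfolding FracGamma_Rcirc_iff using ab v_nonzero[OF ab(3)] unfolding mem_Rcirc by blast
  then show "c \<in> Phi ` FracGamma (Rcirc v)"
    using Phi_fg_class_v[OF ab(1-3)] ab(4) r by force
qed auto

lemma v_eq_Phi_frac_pi: "v r = Phi (frac_pi (Rcirc v) r)"
proof -
  let ?P = "\<lambda>(a, b). a \<in> Rcirc v \<and> b \<in> Rcirc v \<and> b \<noteq> 0 \<and> r = a / b"
  obtain a b where ab: "(SOME z. ?P z) = (a, b)"
    by fastforce
  obtain a0 b0 where "a0 \<in> Rcirc v" "b0 \<in> Rcirc v" "b0 \<noteq> 0" "r = a0 / b0"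
    by (rule Rcirc_quotientE)
  then have "\<exists>z. ?P z"
    by auto
  then have "?P (a, b)"
    unfolding ab[symmetric] by (rule someI_ex)
  moreover have "frac_pi (Rcirc v) r = fg_class (Rcirc v) (v -` {v a}, v -` {v b})"
    unfolding frac_pi_def ab gclass_Rcirc by simp
  ultimately show ?thesis
    using Phi_fg_class_v by auto
qed

lemma Phi_fg_zero: "Phi (fg_zero (Rcirc v)) = 0"
  unfolding fg_zero_def gclass_Rcirc v_0 v_1
  using Phi_fg_class[OF zero_ple ple_refl one_neq_zero] by simp

lemma Phi_fg_one: "Phi (fg_one (Rcirc v)) = 1"
  unfolding fg_one_def gclass_Rcirc v_1
  using Phi_fg_class[OF ple_refl ple_refl one_neq_zero] by (simp add: sf_inv_one)

end

theorem lemma2p15: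
  fixes v :: "'a::field \<Rightarrow> 'b::idem_semifield"
  assumes "valuation v" and "surj v" and "bezout_valuation v"
  shows "frac_in (Rcirc v) = UNIV \<and> bezout_domain (Rcirc v) \<and>
    (\<exists>\<Phi>. bij_betw \<Phi> (FracGamma (Rcirc v)) (UNIV :: 'b set) \<and>
        (\<forall>X\<in>FracGamma (Rcirc v). \<forall>Y\<in>FracGamma (Rcirc v).
            \<Phi> (fg_add (Rcirc v) X Y) = \<Phi> X + \<Phi> Y \<and>
            \<Phi> (fg_mult (Rcirc v) X Y) = \<Phi> X * \<Phi> Y) \<and>
        \<Phi> (fg_zero (Rcirc v)) = 0 \<and> \<Phi> (fg_one (Rcirc v)) = 1 \<and>
        (\<forall>r. v r = \<Phi> (frac_pi (Rcirc v) r)))"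
proof -
  interpret surjective_bezout_field_valuation v
    using assms by unfold_locales
  have "bij_betw Phi (FracGamma (Rcirc v)) UNIV"
    using inj_on_Phi Phi_image by (simp add: bij_betw_def)
  then show ?thesis
    using frac_in_Rcirc bezout_domain_Rcirc Phi_fg_add Phi_fg_mult Phi_fg_zero Phi_fg_one
      v_eq_Phi_frac_pi
    by blast
qed

end
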